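(* Let $X$ be a set and let $X_d$ denote $X$ with the discrete topology. Then every flow $\varphi:\mathbb{R}\times 2^{X_d}_L\rightarrow 2^{X_d}_L$ is trivial, i.e. $\varphi(t,C)=C$ for all $t\in\mathbb{R}$ and all $C\in 2^{X_d}_L$.
   Context: For a set $X$ with the discrete topology, $2^X$ denotes the set of all non-empty (closed, hence all non-empty) subsets of $X$. For $U\subseteq X$ put $L_U=\{F\subseteq X \mid F\neq\emptyset,\ F\cap U\neq\emptyset\}$. The lower semifinite topology on $2^X$ is the topology having the sets $L_U$, $U$ open in $X_d$ (i.e. any subset of $X$), as a subbase; the resulting space is denoted $2^{X_d}_L$. A flow on a topological space $Y$ is a continuous map $\varphi:\mathbb{R}\times Y\to Y$ (with $\mathbb{R}$ carrying its usual topology and $\mathbb{R}\times Y$ the product topology) such that $\varphi(0,y)=y$ and $\varphi(s+t,y)=\varphi(s,\varphi(t,y))$ for all $s,t\in\mathbb{R}$, $y\in Y$. *)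

theory Defs
  imports "HOL-Analysis.Analysis"
begin

text \<open>The hyperspace 2^X of all non-empty subsets of X (all subsets are closed in X_d).\<close>
definition hyperspace :: "'a set \<Rightarrow> 'a set set" where
  "hyperspace X = {F. F \<subseteq> X \<and> F \<noteq> {}}"

definition lower_set :: "'a set \<Rightarrow> 'a set \<Rightarrow> 'a set set" where
  "lower_set X U = {F \<in> hyperspace X. F \<inter> U \<noteq> {}}"

text \<open>The lower semifinite topology on 2^{X_d}: subbase L_U, U any subset of X
  (every subset is open in the discrete topology).\<close>
definition lower_semifinite_discrete :: "'a set \<Rightarrow> 'a set topology" where
  "lower_semifinite_discrete X = topology_generated_by {lower_set X U | U. U \<subseteq> X}"

definition is_flow :: "'b topology \<Rightarrow> (real \<times> 'b \<Rightarrow> 'b) \<Rightarrow> bool" where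
  "is_flow Y \<phi> \<longleftrightarrow>
     continuous_map (prod_topology euclideanreal Y) Y \<phi> \<and>
     (\<forall>y\<in>topspace Y. \<phi> (0, y) = y) \<and>
     (\<forall>s t. \<forall>y\<in>topspace Y. \<phi> (s + t, y) = \<phi> (s, \<phi> (t, y)))"

end

theory Submission
  imports Defs
begin

text \<open>Open sets of the lower semifinite topology are closed upwards, so every continuous self-map
  is monotone for inclusion. A flow fixes each singleton: the orbit of {x} stays in the
  open set of sets containing x for small times, monotonicity and the inverse map then
  squeeze it to {x}, and the group law spreads this to all times. Monotonicity finally
  gives C \<subseteq> \<phi>(t, C) for every C and t, and applying
  \<phi>(t, -) to C \<subseteq> \<phi>(-t, C) yields the reverse inclusion.\<close>

lemma topspace_lower_semifinite_discrete:
  "topspace (lower_semifinite_discrete X) = hyperspace X"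
  unfolding lower_semifinite_discrete_def topology_generated_by_topspace lower_set_def
  by (auto simp: hyperspace_def)

lemma openin_lower_semifinite_discrete_upclosed:
  assumes "openin (lower_semifinite_discrete X) V" "A \<in> V" "A \<subseteq> B" "B \<in> hyperspace X"
  shows "B \<in> V"
proof -
  have "generate_topology_on {lower_set X U | U. U \<subseteq> X} V"
    using assms(1) unfolding lower_semifinite_discrete_def openin_topology_generated_by_iff .
  then show ?thesis
    using assms(2-4)
  proof (induction arbitrary: A rule: generate_topology_on.induct)
    case (Basis s)
    then show ?case unfolding lower_set_def by blast
  qed blast+
qed

lemma openin_lower_set_singleton:
  assumes "a \<in> X"
  shows "openin (lower_semifinite_discrete X) (lower_set X {a})"
  unfolding lower_semifinite_discrete_def
  by (rule topology_generated_by_Basis) (use assms in auto)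

lemma continuous_map_lower_semifinite_discrete_mono:
  assumes f: "continuous_map (lower_semifinite_discrete X) (lower_semifinite_discrete X) f"
    and A: "A \<in> hyperspace X" and B: "B \<in> hyperspace X" and "A \<subseteq> B"
  shows "f A \<subseteq> f B"
proof
  fix a assume a: "a \<in> f A"
  have fA: "f A \<in> hyperspace X"
    using f A by (auto simp: continuous_map_def topspace_lower_semifinite_discrete)
  then have "a \<in> X" using a unfolding hyperspace_def by auto
  then have "openin (lower_semifinite_discrete X)
      {C \<in> hyperspace X. f C \<in> lower_set X {a}}"
    using openin_continuous_map_preimage[OF f openin_lower_set_singleton]
    by (simp add: topspace_lower_semifinite_discrete)
  moreover have "A \<in> {C \<in> hyperspace X. f C \<in> lower_set X {a}}"
    using A fA a unfolding lower_set_def by auto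
  ultimately have "f B \<in> lower_set X {a}"
    using openin_lower_semifinite_discrete_upclosed \<open>A \<subseteq> B\<close> B by blast
  then show "a \<in> f B" unfolding lower_set_def by auto
qed

lemma flow_in_topspace:
  assumes "is_flow Y \<phi>" "y \<in> topspace Y"
  shows "\<phi> (t, y) \<in> topspace Y"
  using assms by (auto simp: is_flow_def continuous_map_def)

lemma flow_inverse:
  assumes "is_flow Y \<phi>" "y \<in> topspace Y"
  shows "\<phi> (t, \<phi> (-t, y)) = y"
  using assms unfolding is_flow_def by (metis add.right_inverse)

lemma continuous_map_flow_time_slice:
  assumes "is_flow Y \<phi>"
  shows "continuous_map Y Y (\<lambda>y. \<phi> (t, y))"
proof -
  have "continuous_map Y (prod_topology euclideanreal Y) (\<lambda>y. (t, y))"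
    by (intro continuous_map_pairedI continuous_map_const[THEN iffD2] continuous_map_id) auto
  then show ?thesis
    using continuous_map_compose assms unfolding is_flow_def o_def by blast
qed

lemma continuous_map_flow_orbit:
  assumes "is_flow Y \<phi>" "y \<in> topspace Y"
  shows "continuous_map euclideanreal Y (\<lambda>s. \<phi> (s, y))"
proof -
  have "continuous_map euclideanreal (prod_topology euclideanreal Y) (\<lambda>s. (s, y))"
    using assms(2)
    by (intro continuous_map_pairedI continuous_map_const[THEN iffD2] continuous_map_id) auto
  then show ?thesis
    using continuous_map_compose assms(1) unfolding is_flow_def o_def by blast
qed

lemma fixed_for_small_times_imp_fixed:
  fixes \<phi> :: "real \<times> 'b \<Rightarrow> 'b"
  assumes group: "\<And>s t. \<phi> (s + t, y) = \<phi> (s, \<phi> (t, y))"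
    and "e > 0" and small: "\<And>s. \<bar>s\<bar> < e \<Longrightarrow> \<phi> (s, y) = y"
  shows "\<phi> (t, y) = y"
proof -
  have multiple: "\<phi> (real n * s, y) = y" if "\<bar>s\<bar> < e" for n s
  proof (induction n)
    case 0
    then show ?case using small \<open>e > 0\<close> by simp
  next
    case (Suc n)
    have "\<phi> (real (Suc n) * s, y) = \<phi> (s, \<phi> (real n * s, y))"
      using group[of s "real n * s"] by (simp add: algebra_simps)
    then show ?case using Suc small that by simp
  qed
  obtain n :: nat where n: "\<bar>t\<bar> / e < real n"
    using reals_Archimedean2 by blast
  then have "real n > 0"
    using \<open>e > 0\<close> by (smt (verit) divide_nonneg_pos abs_ge_zero)
  moreover have "\<bar>t / real n\<bar> < e"
    using n \<open>e > 0\<close> \<open>real n > 0\<close> by (simp add: abs_divide field_simps)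
  ultimately show ?thesis
    using multiple[of "t / real n" n] by simp
qed

context
  fixes X :: "'a set" and \<phi> :: "real \<times> 'a set \<Rightarrow> 'a set"
  assumes flow: "is_flow (lower_semifinite_discrete X) \<phi>"
begin

lemma lower_semifinite_flow_mono:
  assumes "A \<in> hyperspace X" "B \<in> hyperspace X" "A \<subseteq> B"
  shows "\<phi> (t, A) \<subseteq> \<phi> (t, B)"
  using continuous_map_lower_semifinite_discrete_mono[OF continuous_map_flow_time_slice[OF flow]]
    assms by blast

lemma lower_semifinite_flow_in_hyperspace:
  "C \<in> hyperspace X \<Longrightarrow> \<phi> (t, C) \<in> hyperspace X"
  using flow_in_topspace[OF flow] by (simp add: topspace_lower_semifinite_discrete)

lemma lower_semifinite_flow_fixes_singleton:
  assumes x: "x \<in> X"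
  shows "\<phi> (t, {x}) = {x}"
proof -
  have sx: "{x} \<in> hyperspace X" using x by (simp add: hyperspace_def)
  then have sT: "{x} \<in> topspace (lower_semifinite_discrete X)"
    by (simp add: topspace_lower_semifinite_discrete)
  let ?W = "{s. \<phi> (s, {x}) \<in> lower_set X {x}}"
  have "openin euclideanreal ?W"
    using openin_continuous_map_preimage[OF continuous_map_flow_orbit[OF flow sT]
        openin_lower_set_singleton[OF x]] by simp
  moreover have "0 \<in> ?W"
    using flow sT x unfolding is_flow_def lower_set_def by (simp add: hyperspace_def)
  ultimately obtain e where "e > 0" and "ball 0 e \<subseteq> ?W"
    by (metis open_contains_ball open_openin)
  then have contains: "x \<in> \<phi> (s, {x})" if "\<bar>s\<bar> < e" for s
    using that unfolding lower_set_def by (auto simp: subset_iff dist_real_def)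
  have "\<phi> (s, {x}) = {x}" if s: "\<bar>s\<bar> < e" for s
  proof
    have "{x} \<subseteq> \<phi> (-s, {x})" using contains s by simp
    then have "\<phi> (s, {x}) \<subseteq> \<phi> (s, \<phi> (-s, {x}))"
      using lower_semifinite_flow_mono sx lower_semifinite_flow_in_hyperspace by blast
    then show "\<phi> (s, {x}) \<subseteq> {x}"
      using flow_inverse[OF flow sT] by simp
    show "{x} \<subseteq> \<phi> (s, {x})" using contains s by simp
  qed
  moreover have "\<phi> (s + t', {x}) = \<phi> (s, \<phi> (t', {x}))" for s t'
    using flow sT unfolding is_flow_def by blast
  ultimately show ?thesis
    using fixed_for_small_times_imp_fixed \<open>e > 0\<close> by metis
qed

lemma lower_semifinite_flow_expanding:
  assumes C: "C \<in> hyperspace X"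
  shows "C \<subseteq> \<phi> (t, C)"
proof
  fix x assume "x \<in> C"
  then have "x \<in> X" "{x} \<in> hyperspace X" using C by (auto simp: hyperspace_def)
  then have "\<phi> (t, {x}) \<subseteq> \<phi> (t, C)"
    using lower_semifinite_flow_mono C \<open>x \<in> C\<close> by blast
  then show "x \<in> \<phi> (t, C)"
    using lower_semifinite_flow_fixes_singleton[OF \<open>x \<in> X\<close>] by simp
qed

end

theorem mainTheorem1:
  fixes X :: "'a set" and \<phi> :: "real \<times> 'a set \<Rightarrow> 'a set"
  assumes "is_flow (lower_semifinite_discrete X) \<phi>"
  shows "\<forall>t. \<forall>C\<in>topspace (lower_semifinite_discrete X). \<phi> (t, C) = C"
proof (intro allI ballI)
  fix t C assume "C \<in> topspace (lower_semifinite_discrete X)"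
  then have C: "C \<in> hyperspace X" by (simp add: topspace_lower_semifinite_discrete)
  have "\<phi> (t, C) \<subseteq> \<phi> (t, \<phi> (-t, C))"
    using lower_semifinite_flow_mono[OF assms C] lower_semifinite_flow_in_hyperspace[OF assms C]
      lower_semifinite_flow_expanding[OF assms C] by blast
  also have "\<dots> = C"
    using flow_inverse assms C by (metis topspace_lower_semifinite_discrete)
  finally show "\<phi> (t, C) = C"
    using lower_semifinite_flow_expanding[OF assms C] by blast
qed

end
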